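(* Let $(\mu_n)_{n\ge1}$ be a sequence of probability measures on $\mathbb{Z}$ such that (1) there exist $0<\alpha\le1$ and $C>0$ such that for all $n\ge1$, $|\mu_n(x+y)-\mu_n(x)|\le C\frac{|y|^{\alpha}}{|x|^{1+\alpha}}$ for all $x,y\in\mathbb{Z}$ with $2|y|\le|x|$; (2) $\hat{\mu}_n(t)\to0$ as $n\to\infty$ for almost every $t\in[-1/2,1/2)$. Then $\|\mu_n-\mu_n*\delta_1\|_1=\sum_{k\in\mathbb{Z}}|\mu_n(k)-\mu_n(k-1)|\to0$ as $n\to\infty$.
   Context: $\delta_1$ denotes the point mass at $1$, so $(\mu*\delta_1)(k)=\mu(k-1)$. The Fourier transform of a probability measure $\mu$ on $\mathbb{Z}$ is $\hat{\mu}(t)=\sum_{k\in\mathbb{Z}}\mu(k)e^{2\pi ikt}$, $t\in[-1/2,1/2)$. *)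

theory Defs
  imports "HOL-Probability.Probability"
begin

definition fourier_pmf :: "int pmf \<Rightarrow> real \<Rightarrow> complex" where
  "fourier_pmf \<mu> t = (\<Sum>\<^sub>\<infinity>k::int. complex_of_real (pmf \<mu> k) * cis (2 * pi * of_int k * t))"

end

theory Submission
  imports Defs
begin

text \<open>
  Proof idea.  Write a_n(k) = |mu_n(k) - mu_n(k - 1)|.

  (1) Fourier inversion on the circle: every probability measure p on the integers
      satisfies p(k) = integral over [-1/2,1/2] of p^(t) e^(-2 pi i k t) dt, by Fubini and
      the orthogonality of the characters t |-> e^(2 pi i m t).  As |p^| <= 1, dominated
      convergence turns the hypothesis "mu_n^ -> 0 almost everywhere" into mu_n(k) -> 0
      for every k, hence a_n(k) -> 0 for every k.
  (2) The regularity hypothesis with y = -1 gives a_n(k) <= C |k|^(-1-alpha) for |k| >= 2,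
      and trivially a_n(k) <= 1; so all a_n are dominated by one function that is
      summable over the integers because 1 + alpha > 1.
  (3) Dominated convergence for sums (Tannery's theorem, i.e. Lebesgue's theorem for the
      counting measure) yields sum_k a_n(k) -> 0.
\<close>

lemma borel_measurable_ident_lebesgue_on: "(\<lambda>t::real. t) \<in> borel_measurable (lebesgue_on S)"
  by (rule measurable_restrict_space1, rule measurable_completion) simp

lemma borel_measurable_character:
  fixes u v :: "'a \<Rightarrow> real"
  assumes "u \<in> borel_measurable M" and "v \<in> borel_measurable M"
  shows "(\<lambda>x. cis (2 * pi * u x * v x)) \<in> borel_measurable M"
proof -
  have pair: "(\<lambda>x. (u x, v x)) \<in> borel_measurable M"
    using assms by measurable
  have cont: "continuous_on UNIV (\<lambda>(a::real, b::real). cis (2 * pi * a * b))"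
    unfolding case_prod_beta by (intro continuous_intros)
  from borel_measurable_continuous_on[OF cont pair] show ?thesis
    by simp
qed

lemma fourier_pmf_conv_integral:
  "fourier_pmf p t = (\<integral>k. cis (2 * pi * of_int k * t) \<partial>measure_pmf p)"
proof -
  have "(\<integral>k. cis (2 * pi * of_int k * t) \<partial>measure_pmf p)
      = infsetsum (\<lambda>k. pmf p k *\<^sub>R cis (2 * pi * of_int k * t)) UNIV"
    unfolding infsetsum_def measure_pmf_eq_density by (subst integral_density) simp_all
  also have "\<dots> = infsum (\<lambda>k. pmf p k *\<^sub>R cis (2 * pi * of_int k * t)) UNIV"
    by (rule infsetsum_infsum, rule abs_summable_on_comparison_test'[OF pmf_abs_summable[of p UNIV]])
       (simp add: norm_cis)
  finally show ?thesis
    unfolding fourier_pmf_def by (simp add: scaleR_conv_of_real)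
qed

lemma norm_fourier_pmf_le_1: "norm (fourier_pmf p t) \<le> 1"
proof -
  have "norm (fourier_pmf p t) \<le> (\<integral>k. norm (cis (2 * pi * of_int k * t)) \<partial>measure_pmf p)"
    unfolding fourier_pmf_conv_integral by (rule integral_norm_bound)
  also have "\<dots> = 1" by simp
  finally show ?thesis .
qed

lemma borel_measurable_fourier_pmf:
  "(\<lambda>t. fourier_pmf p t) \<in> borel_measurable (lebesgue_on S)"
  unfolding fourier_pmf_conv_integral
proof (rule measure_pmf.borel_measurable_lebesgue_integral)
  show "(\<lambda>(t, k). cis (2 * pi * of_int k * t)) \<in> borel_measurable (lebesgue_on S \<Otimes>\<^sub>M measure_pmf p)"
    unfolding case_prod_beta
    by (intro borel_measurable_character measurable_compose[OF measurable_snd]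
              measurable_compose[OF measurable_fst borel_measurable_ident_lebesgue_on]) simp
qed

lemma integral_cis_int_period:
  fixes m :: int
  shows "(\<integral>t. cis (2 * pi * of_int m * t) \<partial>lebesgue_on {-1/2..1/2}) = (if m = 0 then 1 else 0)"
proof -
  have "integrable (lebesgue_on {-1/2..1/2::real}) (\<lambda>t. cis (2 * pi * of_int m * t))"
    by (intro continuous_imp_integrable_real continuous_intros)
  then have lebesgue_eq_gauge: "(\<integral>t. cis (2 * pi * of_int m * t) \<partial>lebesgue_on {-1/2..1/2})
      = integral {-1/2..1/2} (\<lambda>t. cis (2 * pi * of_int m * t))"
    by (rule lebesgue_integral_eq_integral) simp
  show ?thesis
  proof (cases "m = 0")
    case True
    then show ?thesis using lebesgue_eq_gauge by simp
  next
    case False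
    define c where "c = complex_of_real (2 * pi * of_int m) * \<i>"
    have "c \<noteq> 0" using False by (simp add: c_def)
    define F where "F t = cis (2 * pi * of_int m * t) / c" for t
    have deriv: "(F has_vector_derivative cis (2 * pi * of_int m * t)) (at t within {-1/2..1/2})" for t
    proof -
      have "((\<lambda>t. cis (2 * pi * of_int m * t)) has_vector_derivative c * cis (2 * pi * of_int m * t))
              (at t within {-1/2..1/2})"
        unfolding has_vector_derivative_def c_def
        by (rule has_derivative_eq_rhs, intro has_derivative_cis derivative_eq_intros)
           (auto simp: scaleR_conv_of_real algebra_simps)
      from has_vector_derivative_divide[OF this, of c] show ?thesis
        using \<open>c \<noteq> 0\<close> unfolding F_def by simp
    qed
    have "((\<lambda>t. cis (2 * pi * of_int m * t)) has_integral (F (1/2) - F (-1/2))) {-1/2..1/2}"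
      by (rule fundamental_theorem_of_calculus, simp, rule deriv)
    moreover have "F (1/2) = F (-1/2)"
      unfolding F_def by (simp add: cis.ctr sin_zero_iff_int2)
    ultimately show ?thesis using lebesgue_eq_gauge False by (simp add: integral_unique)
  qed
qed

lemma pmf_fourier_inversion:
  "(\<integral>t. fourier_pmf p t * cis (- (2 * pi * of_int j * t)) \<partial>lebesgue_on {-1/2..1/2})
     = complex_of_real (pmf p j)"
proof -
  let ?P = "measure_pmf p" and ?L = "lebesgue_on {-1/2..1/2::real}"
  let ?f = "\<lambda>(k::int) t. cis (2 * pi * of_int (k - j) * t)"
  interpret L: finite_measure ?L
    by (rule finite_measure_lebesgue_on) simp
  interpret PL: pair_sigma_finite ?P ?L ..
  interpret PL_fin: finite_measure "?P \<Otimes>\<^sub>M ?L"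
    by (rule finite_measure_pair_measure) unfold_locales
  have "case_prod ?f \<in> borel_measurable (?P \<Otimes>\<^sub>M ?L)"
    unfolding case_prod_beta
    by (intro borel_measurable_character measurable_compose[OF measurable_fst]
              measurable_compose[OF measurable_snd borel_measurable_ident_lebesgue_on]) simp
  then have int: "integrable (?P \<Otimes>\<^sub>M ?L) (case_prod ?f)"
    by (intro PL_fin.integrable_const_bound[where B=1]) auto
  have "fourier_pmf p t * cis (- (2 * pi * of_int j * t)) = (\<integral>k. ?f k t \<partial>?P)" for t
    unfolding fourier_pmf_conv_integral integral_mult_left_zero[symmetric]
    by (intro Bochner_Integration.integral_cong refl) (simp add: cis_mult ring_distribs)
  then have "(\<integral>t. fourier_pmf p t * cis (- (2 * pi * of_int j * t)) \<partial>?L) = (\<integral>t. (\<integral>k. ?f k t \<partial>?P) \<partial>?L)"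
    by simp
  also have "\<dots> = (\<integral>k. (\<integral>t. ?f k t \<partial>?L) \<partial>?P)"
    by (rule PL.Fubini_integral[OF int])
  also have "\<dots> = (\<integral>k. complex_of_real (indicator {j} k) \<partial>?P)"
    by (intro Bochner_Integration.integral_cong refl)
       (simp only: integral_cis_int_period, simp add: indicator_def)
  also have "\<dots> = complex_of_real (pmf p j)"
    by (simp add: measure_pmf_single)
  finally show ?thesis .
qed

text \<open>If the Fourier transforms tend to 0 almost everywhere on a period, then every single
  mass tends to 0: apply dominated convergence (with bound 1) to the inversion formula.\<close>
lemma pmf_tendsto_zero_if_fourier_tendsto_zero:
  fixes \<mu> :: "nat \<Rightarrow> int pmf"
  assumes "AE t in lborel. t \<in> {-1/2..<1/2} \<longrightarrow> ((\<lambda>n. fourier_pmf (\<mu> n) t) \<longlonglongrightarrow> 0)"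
  shows "(\<lambda>n. pmf (\<mu> n) k) \<longlonglongrightarrow> 0"
proof -
  let ?L = "lebesgue_on {-1/2..1/2::real}"
  interpret L: finite_measure ?L
    by (rule finite_measure_lebesgue_on) simp
  define s where "s n t = fourier_pmf (\<mu> n) t * cis (- (2 * pi * of_int k * t))" for n t
  have "AE t in lborel. t \<in> {-1/2..1/2} \<longrightarrow> ((\<lambda>n. fourier_pmf (\<mu> n) t) \<longlonglongrightarrow> 0)"
    using assms AE_lborel_singleton[of "1/2::real"] by eventually_elim auto
  then have AE_lim: "AE t in ?L. (\<lambda>n. fourier_pmf (\<mu> n) t) \<longlonglongrightarrow> 0"
    using AE_completion by (subst AE_restrict_space_iff) auto
  have "(\<lambda>n. integral\<^sup>L ?L (s n)) \<longlonglongrightarrow> integral\<^sup>L ?L (\<lambda>t. 0)"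
  proof (rule integral_dominated_convergence[where w="\<lambda>_. 1"])
    have "(\<lambda>t. cis (- (2 * pi * of_int k * t))) \<in> borel_measurable ?L"
      using borel_measurable_character[OF borel_measurable_const borel_measurable_ident_lebesgue_on,
                                       of "- of_int k"]
      by simp
    then show "s n \<in> borel_measurable ?L" for n
      unfolding s_def by (intro borel_measurable_times borel_measurable_fourier_pmf)
    show "AE t in ?L. (\<lambda>n. s n t) \<longlonglongrightarrow> 0"
      using AE_lim by eventually_elim (auto simp: s_def intro: tendsto_mult_left_zero)
    show "AE t in ?L. norm (s n t) \<le> 1" for n
      by (auto simp: s_def norm_mult norm_fourier_pmf_le_1)
  qed simp_all
  then have "(\<lambda>n. complex_of_real (pmf (\<mu> n) k)) \<longlonglongrightarrow> 0"
    unfolding s_def pmf_fourier_inversion by simp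
  from tendsto_Re[OF this] show ?thesis by simp
qed

text \<open>Tannery's theorem for an arbitrary index set: a uniformly dominated family of
  summable functions tending pointwise to 0 has sums tending to 0.  It is the Lebesgue
  dominated convergence theorem for the counting measure.\<close>
lemma infsum_dominated_convergence:
  fixes f :: "nat \<Rightarrow> 'a \<Rightarrow> real"
  assumes g: "g summable_on UNIV"
    and bound: "\<And>n k. \<bar>f n k\<bar> \<le> g k"
    and lim: "\<And>k. (\<lambda>n. f n k) \<longlonglongrightarrow> 0"
  shows "(\<lambda>n. \<Sum>\<^sub>\<infinity>k. f n k) \<longlonglongrightarrow> 0"
proof -
  let ?N = "count_space (UNIV :: 'a set)"
  have "Infinite_Sum.abs_summable_on g UNIV"
    using g summable_on_iff_abs_summable_on_real by blast
  then have g_int: "integrable ?N g"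
    using abs_summable_equivalent unfolding Infinite_Set_Sum.abs_summable_on_def by blast
  have f_int: "integrable ?N (f n)" for n
  proof (rule Bochner_Integration.integrable_bound[OF g_int])
    show "AE k in ?N. norm (f n k) \<le> norm (g k)"
      using bound by (intro AE_I2) (metis abs_ge_self order_trans real_norm_def)
  qed simp
  have "(\<lambda>n. integral\<^sup>L ?N (f n)) \<longlonglongrightarrow> integral\<^sup>L ?N (\<lambda>_. 0)"
    by (rule integral_dominated_convergence[where w=g]) (simp_all add: g_int lim bound AE_I2)
  moreover have "integral\<^sup>L ?N (f n) = (\<Sum>\<^sub>\<infinity>k. f n k)" for n
    using f_int infsetsum_infsum[of "f n" UNIV]
    by (simp add: Infinite_Set_Sum.abs_summable_on_def infsetsum_def)
  ultimately show ?thesis by simp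
qed

text \<open>The series of \<open>|k| powr -s\<close> over all integers \<open>k\<close> converges for \<open>s > 1\<close>
  (the term for \<open>k = 0\<close> is \<open>0 powr -s = 0\<close>): split into two copies of the
  corresponding series over the naturals.\<close>
lemma summable_on_int_abs_powr:
  fixes s :: real
  assumes "s > 1"
  shows "(\<lambda>k::int. real_of_int \<bar>k\<bar> powr (- s)) summable_on UNIV"
proof -
  let ?h = "\<lambda>k::int. real_of_int \<bar>k\<bar> powr (- s)"
  have "summable (\<lambda>m::nat. real m powr (- s))"
    using assms by (subst summable_real_powr_iff) simp
  then have nat_sum: "(\<lambda>m::nat. real m powr (- s)) summable_on UNIV"
    by (subst summable_on_UNIV_nonneg_real_iff) auto
  have "?h summable_on range int"
    using nat_sum by (subst summable_on_reindex) (auto simp: o_def)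
  moreover have "?h summable_on range (\<lambda>m. - int m)"
    using nat_sum by (subst summable_on_reindex) (auto simp: o_def inj_on_def)
  moreover have "range int \<union> range (\<lambda>m. - int m) = (UNIV :: int set)"
    by (auto simp: image_iff intro: int_cases2)
  ultimately show ?thesis
    by (metis summable_on_union)
qed

text \<open>The decay profile \<open>k \<mapsto> C |k| powr -s\<close>, plus 1 on \<open>|k| \<le> 1\<close> where the decay
  hypothesis gives no information and only the trivial bound 1 is available.\<close>
definition increment_majorant :: "real \<Rightarrow> real \<Rightarrow> int \<Rightarrow> real" where
  "increment_majorant C s k = C * real_of_int \<bar>k\<bar> powr (- s) + (if \<bar>k\<bar> \<le> 1 then 1 else 0)"

lemma summable_increment_majorant:
  assumes "s > 1"
  shows "increment_majorant C s summable_on UNIV"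
proof -
  have "(\<lambda>k::int. if \<bar>k\<bar> \<le> 1 then 1 else 0 :: real) summable_on UNIV"
    by (rule summable_on_cong_neutral[where T="{-1..1}" and g="\<lambda>_. 1", THEN iffD2]) auto
  then show ?thesis
    unfolding increment_majorant_def using summable_on_int_abs_powr[OF assms]
    by (intro summable_on_add summable_on_cmult_right)
qed

lemma pmf_increment_le_majorant:
  fixes p :: "int pmf"
  assumes "C \<ge> 0"
    and decay: "\<And>x y. 2 * \<bar>y\<bar> \<le> \<bar>x\<bar> \<Longrightarrow>
           \<bar>pmf p (x + y) - pmf p x\<bar> \<le> C * (real_of_int \<bar>y\<bar> powr \<alpha>) / (real_of_int \<bar>x\<bar> powr (1 + \<alpha>))"
  shows "\<bar>pmf p k - pmf p (k - 1)\<bar> \<le> increment_majorant C (1 + \<alpha>) k"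
proof (cases "\<bar>k\<bar> \<le> 1")
  case True
  have "\<bar>pmf p k - pmf p (k - 1)\<bar> \<le> 1"
    using pmf_nonneg[of p k] pmf_le_1[of p k] pmf_nonneg[of p "k - 1"] pmf_le_1[of p "k - 1"]
    by linarith
  moreover have "0 \<le> C * real_of_int \<bar>k\<bar> powr (- (1 + \<alpha>))"
    using \<open>C \<ge> 0\<close> by simp
  ultimately show ?thesis
    using True by (simp add: increment_majorant_def)
next
  case False
  have "\<bar>pmf p k - pmf p (k - 1)\<bar> \<le> C * (real_of_int \<bar>-1\<bar> powr \<alpha>) / real_of_int \<bar>k\<bar> powr (1 + \<alpha>)"
    using decay[of "-1" k] False by (simp add: abs_minus_commute)
  then show ?thesis
    using False powr_minus[of "real_of_int \<bar>k\<bar>" "1 + \<alpha>"]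
    by (simp add: increment_majorant_def divide_inverse)
qed

text \<open>The regularity hypothesis is only assumed for \<open>n \<ge> 1\<close>, so the argument is run on the
  shifted sequence \<open>\<mu> (Suc n)\<close>.\<close>

theorem lemma2p2p1:
  fixes \<mu> :: "nat \<Rightarrow> int pmf" and \<alpha> C :: real
  assumes "0 < \<alpha>" and "\<alpha> \<le> 1" and "C > 0"
    and "\<And>n x y. n \<ge> 1 \<Longrightarrow> 2 * \<bar>y\<bar> \<le> \<bar>x\<bar> \<Longrightarrow>
           \<bar>pmf (\<mu> n) (x + y) - pmf (\<mu> n) x\<bar>
             \<le> C * (real_of_int \<bar>y\<bar> powr \<alpha>) / (real_of_int \<bar>x\<bar> powr (1 + \<alpha>))"
    and "AE t in lborel. t \<in> {-1/2..<1/2} \<longrightarrow> ((\<lambda>n. fourier_pmf (\<mu> n) t) \<longlonglongrightarrow> 0)"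
  shows "(\<lambda>n. \<Sum>\<^sub>\<infinity>k::int. \<bar>pmf (\<mu> n) k - pmf (\<mu> n) (k - 1)\<bar>) \<longlonglongrightarrow> 0"
proof -
  define a where "a n k = \<bar>pmf (\<mu> n) k - pmf (\<mu> n) (k - 1)\<bar>" for n k
  have "increment_majorant C (1 + \<alpha>) summable_on UNIV"
    using \<open>0 < \<alpha>\<close> by (intro summable_increment_majorant) simp
  moreover have "\<bar>a (Suc n) k\<bar> \<le> increment_majorant C (1 + \<alpha>) k" for n k
    unfolding a_def abs_abs using \<open>C > 0\<close> assms(4)[of "Suc n"]
    by (intro pmf_increment_le_majorant) auto
  moreover have "(\<lambda>n. a (Suc n) k) \<longlonglongrightarrow> 0" for k
  proof (rule LIMSEQ_Suc)
    note mass_to_zero = pmf_tendsto_zero_if_fourier_tendsto_zero[OF assms(5)]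
    show "(\<lambda>n. a n k) \<longlonglongrightarrow> 0"
      unfolding a_def using tendsto_rabs[OF tendsto_diff[OF mass_to_zero mass_to_zero]] by simp
  qed
  ultimately have "(\<lambda>n. \<Sum>\<^sub>\<infinity>k. a (Suc n) k) \<longlonglongrightarrow> 0"
    by (rule infsum_dominated_convergence)
  then show ?thesis
    unfolding a_def by (rule LIMSEQ_imp_Suc)
qed

end
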